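(* Let $D=(E,\mathcal F)$ be a delta-matroid and let $X$ be a subset of $E$ that is not feasible, i.e. $X\notin\mathcal F$. Let $\mathcal B$ be the collection of all sets $Y\subseteq E$ such that $X\triangle Y\in\mathcal F$ and $|Y|$ is minimum among all subsets $Y'\subseteq E$ with $X\triangle Y'\in\mathcal F$. Then $\mathcal B$ is the collection of bases of a matroid with ground set $E$.
   Context: A delta-matroid $(E,\mathcal F)$ consists of a finite ground set $E$ and a non-empty collection $\mathcal F$ of subsets of $E$ (the feasible sets) satisfying the symmetric exchange axiom: for all $X,Y\in\mathcal F$ and every $e\in X\triangle Y$ there exists $f\in X\triangle Y$ (possibly $f=e$) with $X\triangle\{e,f\}\in\mathcal F$. *)

theory Defs
  imports Main
begin

definition symdiff :: "'a set \<Rightarrow> 'a set \<Rightarrow> 'a set" (infixl "\<triangle>" 70) where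
  "A \<triangle> B = (A - B) \<union> (B - A)"

definition delta_matroid :: "'a set \<Rightarrow> 'a set set \<Rightarrow> bool" where
  "delta_matroid E F \<longleftrightarrow> finite E \<and> F \<noteq> {} \<and> (\<forall>X\<in>F. X \<subseteq> E) \<and>
     (\<forall>X\<in>F. \<forall>Y\<in>F. \<forall>e\<in>X \<triangle> Y. \<exists>f\<in>X \<triangle> Y. X \<triangle> {e, f} \<in> F)"

definition matroid_bases :: "'a set \<Rightarrow> 'a set set \<Rightarrow> bool" where
  "matroid_bases E \<B> \<longleftrightarrow> finite E \<and> \<B> \<noteq> {} \<and> (\<forall>B\<in>\<B>. B \<subseteq> E) \<and>
     (\<forall>B1\<in>\<B>. \<forall>B2\<in>\<B>. \<forall>x\<in>B1 - B2. \<exists>y\<in>B2 - B1. insert y (B1 - {x}) \<in> \<B>)"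

end

theory Submission
  imports Defs
begin

text \<open>Twisting by \<open>X\<close> preserves the symmetric exchange axiom, because
  \<open>(X \<triangle> A) \<triangle> (X \<triangle> B) = A \<triangle> B\<close>. So it suffices to show that the feasible sets of minimum
  cardinality of any delta-matroid form the bases of a matroid. If \<open>B\<^sub>1, B\<^sub>2\<close> are such
  sets and \<open>x \<in> B\<^sub>1 - B\<^sub>2\<close>, symmetric exchange yields \<open>f\<close> with \<open>B\<^sub>1 \<triangle> {x, f}\<close> feasible;
  minimality rules out \<open>f \<in> B\<^sub>1\<close>, so \<open>f \<in> B\<^sub>2 - B\<^sub>1\<close> and \<open>B\<^sub>1 \<triangle> {x, f} = insert f (B\<^sub>1 - {x})\<close>
  is again of minimum cardinality.\<close>

lemma symdiff_symdiff_cancel: "X \<triangle> (X \<triangle> Y) = Y"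
  unfolding symdiff_def by auto

lemma symdiff_symdiff_left_cancel: "(X \<triangle> A) \<triangle> (X \<triangle> B) = A \<triangle> B"
  unfolding symdiff_def by auto

lemma symdiff_assoc: "(X \<triangle> Y) \<triangle> Z = X \<triangle> (Y \<triangle> Z)"
  unfolding symdiff_def by auto

lemma symdiff_subset: "A \<subseteq> E \<Longrightarrow> B \<subseteq> E \<Longrightarrow> A \<triangle> B \<subseteq> E"
  unfolding symdiff_def by auto

definition twist :: "'a set \<Rightarrow> 'a set set \<Rightarrow> 'a set set" where
  "twist X F = (\<lambda>Z. X \<triangle> Z) ` F"

definition min_card_sets :: "'a set set \<Rightarrow> 'a set set" where
  "min_card_sets F = {Y \<in> F. \<forall>Y'\<in>F. card Y \<le> card Y'}"

lemma mem_twist_iff: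
  assumes "X \<subseteq> E" and "\<forall>Z\<in>F. Z \<subseteq> E"
  shows "Y \<in> twist X F \<longleftrightarrow> Y \<subseteq> E \<and> X \<triangle> Y \<in> F"
proof
  assume "Y \<in> twist X F"
  then obtain Z where "Z \<in> F" "Y = X \<triangle> Z"
    by (auto simp: twist_def)
  then show "Y \<subseteq> E \<and> X \<triangle> Y \<in> F"
    using assms by (simp add: symdiff_symdiff_cancel symdiff_subset)
next
  assume "Y \<subseteq> E \<and> X \<triangle> Y \<in> F"
  then show "Y \<in> twist X F"
    unfolding twist_def using symdiff_symdiff_cancel[of X Y] by (metis image_eqI)
qed

lemma delta_matroid_twist:
  assumes "delta_matroid E F" and "X \<subseteq> E"
  shows "delta_matroid E (twist X F)"
  unfolding delta_matroid_def
proof (intro conjI ballI)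
  have exchange: "\<forall>Z\<^sub>1\<in>F. \<forall>Z\<^sub>2\<in>F. \<forall>e\<in>Z\<^sub>1 \<triangle> Z\<^sub>2. \<exists>f\<in>Z\<^sub>1 \<triangle> Z\<^sub>2. Z\<^sub>1 \<triangle> {e, f} \<in> F"
    using assms(1) unfolding delta_matroid_def by blast
  show "finite E" "twist X F \<noteq> {}"
    using assms(1) by (auto simp: delta_matroid_def twist_def)
  show "Z \<subseteq> E" if "Z \<in> twist X F" for Z
    using that assms mem_twist_iff[of X E F Z] by (simp add: delta_matroid_def)
  fix Y\<^sub>1 Y\<^sub>2 e
  assume "Y\<^sub>1 \<in> twist X F" "Y\<^sub>2 \<in> twist X F" and e: "e \<in> Y\<^sub>1 \<triangle> Y\<^sub>2"
  then obtain Z\<^sub>1 Z\<^sub>2 where Z: "Z\<^sub>1 \<in> F" "Z\<^sub>2 \<in> F" and Y: "Y\<^sub>1 = X \<triangle> Z\<^sub>1" "Y\<^sub>2 = X \<triangle> Z\<^sub>2"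
    by (auto simp: twist_def)
  have "e \<in> Z\<^sub>1 \<triangle> Z\<^sub>2"
    using e by (simp add: Y symdiff_symdiff_left_cancel)
  then obtain f where "f \<in> Z\<^sub>1 \<triangle> Z\<^sub>2" and "Z\<^sub>1 \<triangle> {e, f} \<in> F"
    using exchange Z by blast
  moreover have "Y\<^sub>1 \<triangle> Y\<^sub>2 = Z\<^sub>1 \<triangle> Z\<^sub>2"
    by (simp only: Y symdiff_symdiff_left_cancel)
  moreover have "Y\<^sub>1 \<triangle> {e, f} = X \<triangle> (Z\<^sub>1 \<triangle> {e, f})"
    by (simp only: Y symdiff_assoc)
  ultimately show "\<exists>f\<in>Y\<^sub>1 \<triangle> Y\<^sub>2. Y\<^sub>1 \<triangle> {e, f} \<in> twist X F"
    by (auto simp: twist_def)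
qed

lemma min_card_sets_nonempty:
  assumes "F \<noteq> {}"
  shows "min_card_sets F \<noteq> {}"
proof -
  obtain Z where "Z \<in> F"
    using assms by blast
  then obtain Y where "Y \<in> F" "\<forall>Y'. Y' \<in> F \<longrightarrow> card Y \<le> card Y'"
    using ex_has_least_nat[where P = "\<lambda>Y. Y \<in> F" and m = card] by blast
  then show ?thesis
    by (auto simp: min_card_sets_def)
qed

lemma min_card_sets_exchange:
  assumes "delta_matroid E F"
    and B\<^sub>1: "B\<^sub>1 \<in> min_card_sets F" and B\<^sub>2: "B\<^sub>2 \<in> min_card_sets F"
    and x: "x \<in> B\<^sub>1 - B\<^sub>2"
  shows "\<exists>y\<in>B\<^sub>2 - B\<^sub>1. insert y (B\<^sub>1 - {x}) \<in> min_card_sets F"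
proof -
  have "finite E" and FE: "\<forall>Z\<in>F. Z \<subseteq> E"
    and exchange: "\<forall>Z\<^sub>1\<in>F. \<forall>Z\<^sub>2\<in>F. \<forall>e\<in>Z\<^sub>1 \<triangle> Z\<^sub>2. \<exists>f\<in>Z\<^sub>1 \<triangle> Z\<^sub>2. Z\<^sub>1 \<triangle> {e, f} \<in> F"
    using assms(1) unfolding delta_matroid_def by blast+
  have "B\<^sub>1 \<in> F" "B\<^sub>2 \<in> F" and min: "\<forall>Y'\<in>F. card B\<^sub>1 \<le> card Y'"
    using B\<^sub>1 B\<^sub>2 by (auto simp: min_card_sets_def)
  have "finite B\<^sub>1"
    using \<open>B\<^sub>1 \<in> F\<close> FE \<open>finite E\<close> finite_subset by blast
  have "x \<in> B\<^sub>1 \<triangle> B\<^sub>2"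
    using x by (auto simp: symdiff_def)
  then obtain f where f: "f \<in> B\<^sub>1 \<triangle> B\<^sub>2" and feasible: "B\<^sub>1 \<triangle> {x, f} \<in> F"
    using exchange \<open>B\<^sub>1 \<in> F\<close> \<open>B\<^sub>2 \<in> F\<close> by blast
  have "f \<notin> B\<^sub>1"
  proof
    assume "f \<in> B\<^sub>1"
    then have "B\<^sub>1 \<triangle> {x, f} = B\<^sub>1 - {x, f}"
      using x by (auto simp: symdiff_def)
    moreover have "card (B\<^sub>1 - {x, f}) < card B\<^sub>1"
      using \<open>finite B\<^sub>1\<close> x by (intro psubset_card_mono) blast+
    ultimately show False
      using min feasible by fastforce
  qed
  then have "f \<in> B\<^sub>2 - B\<^sub>1"
    using f by (auto simp: symdiff_def)
  have exchanged: "B\<^sub>1 \<triangle> {x, f} = insert f (B\<^sub>1 - {x})"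
    using x \<open>f \<notin> B\<^sub>1\<close> by (auto simp: symdiff_def)
  have "card (insert f (B\<^sub>1 - {x})) = card B\<^sub>1"
    using \<open>finite B\<^sub>1\<close> \<open>f \<notin> B\<^sub>1\<close> x
    by (metis DiffE card_Suc_Diff1 card_insert_disjoint finite_Diff)
  then have "insert f (B\<^sub>1 - {x}) \<in> min_card_sets F"
    using feasible min by (simp add: exchanged min_card_sets_def)
  with \<open>f \<in> B\<^sub>2 - B\<^sub>1\<close> show ?thesis
    by blast
qed

theorem matroid_bases_min_card_sets:
  assumes "delta_matroid E F"
  shows "matroid_bases E (min_card_sets F)"
  unfolding matroid_bases_def
proof (intro conjI ballI)
  show "finite E" "min_card_sets F \<noteq> {}"
    using assms by (simp_all add: delta_matroid_def min_card_sets_nonempty)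
  show "B \<subseteq> E" if "B \<in> min_card_sets F" for B
    using that assms by (simp add: delta_matroid_def min_card_sets_def)
  show "\<exists>y\<in>B\<^sub>2 - B\<^sub>1. insert y (B\<^sub>1 - {x}) \<in> min_card_sets F"
    if "B\<^sub>1 \<in> min_card_sets F" "B\<^sub>2 \<in> min_card_sets F" "x \<in> B\<^sub>1 - B\<^sub>2" for B\<^sub>1 B\<^sub>2 x
    using min_card_sets_exchange[OF assms that] .
qed

theorem lemma4p3:
  fixes E :: "'a set" and F :: "'a set set" and X :: "'a set"
  assumes "delta_matroid E F"
    and "X \<subseteq> E"
    and "X \<notin> F"
  shows "matroid_bases E
           {Y. Y \<subseteq> E \<and> X \<triangle> Y \<in> F \<and>
               (\<forall>Y'. Y' \<subseteq> E \<and> X \<triangle> Y' \<in> F \<longrightarrow> card Y \<le> card Y')}"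
proof -
  have "\<forall>Z\<in>F. Z \<subseteq> E"
    using assms(1) by (simp add: delta_matroid_def)
  then have "{Y. Y \<subseteq> E \<and> X \<triangle> Y \<in> F \<and>
               (\<forall>Y'. Y' \<subseteq> E \<and> X \<triangle> Y' \<in> F \<longrightarrow> card Y \<le> card Y')}
             = min_card_sets (twist X F)"
    using mem_twist_iff[OF assms(2)] by (auto simp: min_card_sets_def)
  then show ?thesis
    using matroid_bases_min_card_sets[OF delta_matroid_twist[OF assms(1,2)]] by simp
qed

end
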